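(* (1) For every $0\le k\le r$, $S^k(0)=(0)\subseteq R_k$. (2) For every $1\le\ell\le r$ and $0\le k\le\ell$, $L^{\ell-k}S^k(0)=J_{\ell,k}(0)\subseteq R_\ell$. (3) For every $1\le\ell\le r$ and $0\le k\le\ell-2$, $S\,L^{\ell-k-1}S^k(0)=L^{\ell-k}S^k(0)$. Here the iterated operators start from the zero ideal of $R_0$.
   Context: Fix a prime $p$ and an integer $r\ge0$. For $0\le k\le r$ let $R_k$ be the commutative ring which is free as a $\mathbb{Z}$-module with basis $X_{k,0},\dots,X_{k,k}$ and multiplication $X_{k,i}X_{k,j}=p^{k-\max(i,j)}X_{k,\min(i,j)}$; thus $X_{k,k}=1$, and an integer $n$ is identified with $nX_{k,k}$. For $0\le k\le\ell\le r$ define: the additive map $\mathrm{ind}^\ell_k:R_k\to R_\ell$, $X_{k,i}\mapsto X_{\ell,i}$; the ring homomorphism $\mathrm{res}^\ell_k:R_\ell\to R_k$, $\mathrm{res}^\ell_k(X_{\ell,i})=p^{\ell-k}X_{k,i}$ if $i\le k$ and $=p^{\ell-i}$ if $i\ge k$; and the multiplicative map $\mathrm{jnd}^\ell_k:R_k\to R_\ell$, $$\mathrm{jnd}^\ell_k\Big(\sum_{i=0}^k m_iX_{k,i}\Big)=m_kX_{\ell,\ell}+\sum_{k\le i<\ell}\frac{m_k^{p^{\ell-i}}-m_k^{p^{\ell-i-1}}}{p^{\ell-i}}X_{\ell,i}+\sum_{0\le i<k}\frac{(\sum_{s=i}^k m_sp^{k-s})^{p^{\ell-k}}-(\sum_{s=i+1}^k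 m_sp^{k-s})^{p^{\ell-k}}}{p^{\ell-i}}X_{\ell,i}$$ ($m_i\in\mathbb{Z}$). For $1\le k\le r$ and an ideal $I\subseteq R_{k-1}$: $L(I)=(\mathrm{res}^k_{k-1})^{-1}(I)\subseteq R_k$, and $S(I)$ is the ideal of $R_k$ generated by $\mathrm{ind}^k_{k-1}(I)\cup\mathrm{jnd}^k_{k-1}(I)$; $L^n,S^n$ are iterates (each step raising the index by one). For $0\le i\le\ell$, $F_{\ell,i}=X_{\ell,i}-p^{\ell-i}$; for $0\le k\le\ell$ and $x\in\mathbb{Z}$, $J_{\ell,k}(x)\subseteq R_\ell$ is the ideal generated by $x,F_{\ell,k},\dots,F_{\ell,\ell-1}$ if $k\le\ell-1$, and $J_{\ell,\ell}(x)=xR_\ell$. *)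

theory Defs
  imports "HOL-Computational_Algebra.Primes"
begin

text \<open>An element of R_k is represented by its coefficient function m :: nat => int
  (coefficient m i of the basis element X_{k,i}); it lies in R_k iff m i = 0 for i > k.\<close>

definition Rk :: "nat \<Rightarrow> (nat \<Rightarrow> int) set" where
  "Rk k = {m. \<forall>i>k. m i = 0}"

definition rzero :: "nat \<Rightarrow> int" where
  "rzero = (\<lambda>_. 0)"

definition radd :: "(nat \<Rightarrow> int) \<Rightarrow> (nat \<Rightarrow> int) \<Rightarrow> (nat \<Rightarrow> int)" where
  "radd a b = (\<lambda>i. a i + b i)"

definition rneg :: "(nat \<Rightarrow> int) \<Rightarrow> (nat \<Rightarrow> int)" where
  "rneg a = (\<lambda>i. - a i)"

definition Xb :: "nat \<Rightarrow> (nat \<Rightarrow> int)" where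
  "Xb i = (\<lambda>t. if t = i then 1 else 0)"

text \<open>the integer n viewed in R_k, i.e. n X_{k,k}\<close>
definition rint :: "nat \<Rightarrow> int \<Rightarrow> (nat \<Rightarrow> int)" where
  "rint k n = (\<lambda>t. if t = k then n else 0)"

text \<open>multiplication in R_k: X_{k,i} X_{k,j} = p^(k - max i j) X_{k, min i j}\<close>
definition rmult :: "nat \<Rightarrow> nat \<Rightarrow> (nat \<Rightarrow> int) \<Rightarrow> (nat \<Rightarrow> int) \<Rightarrow> (nat \<Rightarrow> int)" where
  "rmult p k a b = (\<lambda>t. \<Sum>i\<le>k. \<Sum>j\<le>k.
      if min i j = t then a i * b j * int p ^ (k - max i j) else 0)"

definition is_ideal :: "nat \<Rightarrow> nat \<Rightarrow> (nat \<Rightarrow> int) set \<Rightarrow> bool" where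
  "is_ideal p k I \<longleftrightarrow> I \<subseteq> Rk k \<and> rzero \<in> I \<and>
     (\<forall>a\<in>I. \<forall>b\<in>I. radd a b \<in> I) \<and> (\<forall>a\<in>I. rneg a \<in> I) \<and>
     (\<forall>a\<in>I. \<forall>b\<in>Rk k. rmult p k b a \<in> I)"

definition gen_ideal :: "nat \<Rightarrow> nat \<Rightarrow> (nat \<Rightarrow> int) set \<Rightarrow> (nat \<Rightarrow> int) set" where
  "gen_ideal p k A = \<Inter>{I. is_ideal p k I \<and> A \<subseteq> I}"

text \<open>ind^l_k : X_{k,i} |-> X_{l,i}; on coefficient functions this is the identity\<close>
definition ind :: "nat \<Rightarrow> nat \<Rightarrow> (nat \<Rightarrow> int) \<Rightarrow> (nat \<Rightarrow> int)" where
  "ind l k a = (\<lambda>i. if i \<le> k then a i else 0)"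

definition res :: "nat \<Rightarrow> nat \<Rightarrow> nat \<Rightarrow> (nat \<Rightarrow> int) \<Rightarrow> (nat \<Rightarrow> int)" where
  "res p l k a = (\<lambda>t. if t < k then int p ^ (l - k) * a t
      else if t = k then (\<Sum>i\<in>{k..l}. a i * int p ^ (l - i)) else 0)"

text \<open>jnd^l_k : R_k -> R_l (the divisions are exact; written with div)\<close>
definition jnd :: "nat \<Rightarrow> nat \<Rightarrow> nat \<Rightarrow> (nat \<Rightarrow> int) \<Rightarrow> (nat \<Rightarrow> int)" where
  "jnd p l k m = (\<lambda>i.
     if i = l then m k
     else if k \<le> i \<and> i < l then
       (m k ^ (p ^ (l - i)) - m k ^ (p ^ (l - i - 1))) div (int p ^ (l - i))
     else if i < k then
       ((\<Sum>s\<in>{i..k}. m s * int p ^ (k - s)) ^ (p ^ (l - k))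
        - (\<Sum>s\<in>{i+1..k}. m s * int p ^ (k - s)) ^ (p ^ (l - k))) div (int p ^ (l - i))
     else 0)"

definition Lop :: "nat \<Rightarrow> nat \<Rightarrow> (nat \<Rightarrow> int) set \<Rightarrow> (nat \<Rightarrow> int) set" where
  "Lop p l I = {a \<in> Rk l. res p l (l - 1) a \<in> I}"

definition Sop :: "nat \<Rightarrow> nat \<Rightarrow> (nat \<Rightarrow> int) set \<Rightarrow> (nat \<Rightarrow> int) set" where
  "Sop p l I = gen_ideal p l (ind l (l - 1) ` I \<union> jnd p l (l - 1) ` I)"

fun Siter :: "nat \<Rightarrow> nat \<Rightarrow> (nat \<Rightarrow> int) set" where
  "Siter p 0 = {rzero}"
| "Siter p (Suc k) = Sop p (Suc k) (Siter p k)"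

fun Liter :: "nat \<Rightarrow> nat \<Rightarrow> nat \<Rightarrow> (nat \<Rightarrow> int) set \<Rightarrow> (nat \<Rightarrow> int) set" where
  "Liter p k 0 I = I"
| "Liter p k (Suc n) I = Lop p (k + Suc n) (Liter p k n I)"

definition Fel :: "nat \<Rightarrow> nat \<Rightarrow> nat \<Rightarrow> (nat \<Rightarrow> int)" where
  "Fel p l i = radd (Xb i) (rneg (rint l (int p ^ (l - i))))"

definition Jid :: "nat \<Rightarrow> nat \<Rightarrow> nat \<Rightarrow> int \<Rightarrow> (nat \<Rightarrow> int) set" where
  "Jid p l k x = (if k \<le> l - 1 \<and> k < l
      then gen_ideal p l ({rint l x} \<union> {Fel p l i | i. k \<le> i \<and> i \<le> l - 1})
      else gen_ideal p l {rint l x})"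

end

theory Submission
  imports Defs "HOL-Number_Theory.Number_Theory"
begin

text \<open>
  R_l is the Burnside ring of the cyclic group of order p^l; its ring characters are the marks
  X_{l,i} \<mapsto> [j \<le> i] p^{l-i}, 0 \<le> j \<le> l, the one with j = 0 being the augmentation.
  Every ideal in the statement is K_{l,k} = {a : a_i = 0 for i < k, aug a = 0}, the common kernel
  of the characters with j \<le> k. S^k(0) = 0 = K_{k,k} because ind and jnd fix 0;
  L(K_{l,k}) = K_{l+1,k} because res commutes with the augmentation; and K_{l,k} is generated by
  the F_{l,i} with k \<le> i < l, so it is J_{l,k}(0). Finally S(K_{l,k}) = K_{l+1,k} for k < l:
  ind and jnd map K_{l,k} into K_{l+1,k}; conversely ind turns the F_{l,i} into F_{l+1,i}
  modulo F_{l+1,l}, and F_{l+1,l} = p^{p-2} (p - X_{l,l-1}) - jnd (p - X_{l,l-1}).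
\<close>

lemma prime_dvd_pow_self_diff:
  assumes "prime p"
  shows "int p dvd m ^ p - m"
proof -
  define n where "n = nat (m mod int p)"
  have p0: "p > 0" using assms prime_gt_0_nat by blast
  have n_mod: "int n = m mod int p" using p0 by (simp add: n_def)
  have n_cong: "[int n = m] (mod int p)" using n_mod by (simp add: cong_def)
  have "n < p" using p0 n_mod by (metis of_nat_less_iff pos_mod_bound of_nat_0_less_iff)
  have "[n ^ p = n] (mod p)"
  proof (cases "n = 0")
    case True then show ?thesis using p0 by (simp add: zero_power)
  next
    case False
    then have "\<not> p dvd n" using \<open>n < p\<close> by (meson dvd_imp_le not_gr0 not_le)
    then have "[n ^ (p - 1) * n = 1 * n] (mod p)"
      using fermat_theorem assms cong_scalar_right by blast
    moreover have "n ^ (p - 1) * n = n ^ p" using p0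
      by (cases p) (simp_all add: mult.commute)
    ultimately show ?thesis by simp
  qed
  then have "[int n ^ p = int n] (mod int p)"
    by (metis cong_int_iff of_nat_power)
  then have "[m ^ p = m] (mod int p)" using n_cong
    by (meson cong_pow cong_sym cong_trans)
  then show ?thesis by (simp add: cong_iff_dvd_diff)
qed

text \<open>The binomial step behind the exactness of the divisions in jnd.\<close>

lemma pow_diff_dvd_Suc:
  fixes n :: nat and x y :: int
  assumes "e \<ge> 1" "int n ^ e dvd x"
  shows "int n ^ Suc e dvd (x + y) ^ n - y ^ n"
proof -
  let ?s = "\<Sum>i<n. y ^ (n - Suc i) * (x + y) ^ i"
  have factor: "(x + y) ^ n - y ^ n = x * ?s"
    using power_diff_sumr2[of "x + y" n y] by simp
  have "int n dvd x" using dvd_trans[OF dvd_power[of e "int n"] assms(2)] assms(1) by simp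
  then have "[x + y = y] (mod int n)" by (simp add: cong_iff_dvd_diff)
  then have "[?s = (\<Sum>i<n. y ^ (n - Suc i) * y ^ i)] (mod int n)"
    by (intro cong_sum cong_mult cong_pow cong_refl)
  moreover have "y ^ (n - Suc i) * y ^ i = y ^ (n - 1)" if "i < n" for i
    using that by (simp flip: power_add)
  ultimately have "[?s = int n * y ^ (n - 1)] (mod int n)" by simp
  then have "int n dvd ?s" by (metis cong_dvd_iff dvd_triv_left)
  then have "int n ^ e * int n dvd x * ?s" by (rule mult_dvd_mono[OF assms(2)])
  then show ?thesis using factor by (simp add: mult.commute)
qed

lemma Rk_rmult: "rmult p l b a \<in> Rk l"
  unfolding Rk_def rmult_def by (auto intro!: sum.neutral)

lemma Rk_rint: "rint l c \<in> Rk l"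
  by (simp add: rint_def Rk_def)

lemma rmult_rint: "x \<in> Rk l \<Longrightarrow> rmult p l (rint l c) x = (\<lambda>t. c * x t)"
proof
  fix t assume x: "x \<in> Rk l"
  have "rmult p l (rint l c) x t =
      (\<Sum>i\<le>l. if i = l then (\<Sum>j\<le>l. if j = t then c * x j else 0) else 0)"
    unfolding rmult_def rint_def
  proof (intro sum.cong refl)
    fix i assume i: "i \<in> {..l}"
    show "(\<Sum>j\<le>l. if min i j = t then (if i = l then c else 0) * x j * int p ^ (l - max i j) else 0) =
      (if i = l then \<Sum>j\<le>l. if j = t then c * x j else 0 else 0)"
    proof (cases "i = l")
      case True
      have "(\<Sum>j\<le>l. if min l j = t then c * x j * int p ^ (l - max l j) else 0) =
          (\<Sum>j\<le>l. if j = t then c * x j else 0)"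
        by (intro sum.cong refl) (auto simp: min_def max_def)
      with True show ?thesis by simp
    qed (simp cong: if_cong)
  qed
  also have "\<dots> = c * x t" using x by (auto simp: Rk_def)
  finally show "rmult p l (rint l c) x t = c * x t" .
qed

lemma ideal_smult:
  assumes "is_ideal p l I" "x \<in> I"
  shows "(\<lambda>t. c * x t) \<in> I"
proof -
  have "rmult p l (rint l c) x \<in> I" using assms Rk_rint unfolding is_ideal_def by blast
  moreover have "x \<in> Rk l" using assms unfolding is_ideal_def by blast
  ultimately show ?thesis by (simp add: rmult_rint)
qed

lemma ideal_sum:
  assumes "is_ideal p l I" "finite S" "\<forall>i\<in>S. f i \<in> I"
  shows "(\<lambda>t. \<Sum>i\<in>S. f i t) \<in> I"
  using assms(2,3)
proof (induction S rule: finite_induct)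
  case empty then show ?case using assms(1) by (simp add: is_ideal_def rzero_def)
next
  case (insert x F)
  then have "radd (f x) (\<lambda>t. \<Sum>i\<in>F. f i t) \<in> I" using assms(1) by (simp add: is_ideal_def)
  then show ?case using insert by (simp add: radd_def)
qed

lemma gen_ideal_eqI:
  assumes "is_ideal p l K" "A \<subseteq> K" "\<And>I. is_ideal p l I \<Longrightarrow> A \<subseteq> I \<Longrightarrow> K \<subseteq> I"
  shows "gen_ideal p l A = K"
  using assms unfolding gen_ideal_def by blast

lemma is_ideal_zero: "is_ideal p l {rzero}"
  unfolding is_ideal_def Rk_def rzero_def radd_def rneg_def rmult_def by (auto cong: if_cong)

lemma gen_ideal_zero: "gen_ideal p l {rzero} = {rzero}"
  by (rule gen_ideal_eqI[OF is_ideal_zero]) (auto simp: is_ideal_def)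

definition aug :: "nat \<Rightarrow> nat \<Rightarrow> (nat \<Rightarrow> int) \<Rightarrow> int" where
  "aug p l a = (\<Sum>i\<le>l. a i * int p ^ (l - i))"

definition aug_from :: "nat \<Rightarrow> nat \<Rightarrow> nat \<Rightarrow> (nat \<Rightarrow> int) \<Rightarrow> int" where
  "aug_from p l j a = (\<Sum>i\<in>{j..l}. a i * int p ^ (l - i))"

definition aug_ker :: "nat \<Rightarrow> nat \<Rightarrow> nat \<Rightarrow> (nat \<Rightarrow> int) set" where
  "aug_ker p l k = {a \<in> Rk l. (\<forall>t<k. a t = 0) \<and> aug p l a = 0}"

lemma aug_from_eq_sum_if:
  "aug_from p l j a = (\<Sum>i\<le>l. if j \<le> i then a i * int p ^ (l - i) else 0)"
proof -
  have "{j..l} = {i \<in> {..l}. j \<le> i}" by auto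
  then have "aug_from p l j a = sum (\<lambda>i. a i * int p ^ (l - i)) {i \<in> {..l}. j \<le> i}"
    unfolding aug_from_def by simp
  also have "\<dots> = (\<Sum>i\<le>l. if j \<le> i then a i * int p ^ (l - i) else 0)"
    by (rule sum.inter_filter) simp
  finally show ?thesis .
qed

lemma aug_from_rmult: "aug_from p l j (rmult p l b a) = aug_from p l j b * aug_from p l j a"
proof -
  have "aug_from p l j (rmult p l b a) = (\<Sum>t\<in>{j..l}. \<Sum>i\<le>l. \<Sum>i'\<le>l.
      if min i i' = t then b i * a i' * int p ^ (l - max i i') * int p ^ (l - t) else 0)"
    unfolding aug_from_def rmult_def sum_distrib_right by (intro sum.cong refl) simp
  also have "\<dots> = (\<Sum>i\<le>l. \<Sum>i'\<le>l. \<Sum>t\<in>{j..l}.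
      if min i i' = t then b i * a i' * int p ^ (l - max i i') * int p ^ (l - t) else 0)"
    by (subst sum.swap) (simp add: sum.swap[of _ "{j..l}"])
  also have "\<dots> = (\<Sum>i\<le>l. \<Sum>i'\<le>l.
      if j \<le> min i i' then b i * a i' * int p ^ (l - max i i') * int p ^ (l - min i i') else 0)"
    by (intro sum.cong refl) (auto simp: sum.delta)
  also have "\<dots> = (\<Sum>i\<le>l. \<Sum>i'\<le>l. (if j \<le> i then b i * int p ^ (l - i) else 0) *
        (if j \<le> i' then a i' * int p ^ (l - i') else 0))"
    by (intro sum.cong refl) (auto simp: max_def min_def)
  also have "\<dots> = aug_from p l j b * aug_from p l j a"
    unfolding aug_from_eq_sum_if by (simp add: sum_product)
  finally show ?thesis .
qed

lemma aug_from_Suc: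
  "j \<le> l \<Longrightarrow> aug_from p l j a = a j * int p ^ (l - j) + aug_from p l (Suc j) a"
  unfolding aug_from_def by (simp add: sum.atLeast_Suc_atMost)

lemma aug_eq_sum_lessThan_plus_aug_from:
  "j \<le> l \<Longrightarrow> aug p l a = (\<Sum>i<j. a i * int p ^ (l - i)) + aug_from p l j a"
proof (induction j)
  case 0 then show ?case by (simp add: aug_def aug_from_def atLeast0AtMost)
next
  case (Suc j)
  then show ?case using aug_from_Suc[of j l p a] by simp
qed

lemma aug_split_top: "aug p l a = (\<Sum>i<l. a i * int p ^ (l - i)) + a l"
  unfolding aug_def by (simp flip: lessThan_Suc_atMost)

lemma mem_aug_ker_iff_aug_from:
  assumes "p > 0" "k \<le> l" "a \<in> Rk l"
  shows "a \<in> aug_ker p l k \<longleftrightarrow> (\<forall>j\<le>k. aug_from p l j a = 0)"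
proof
  assume a: "a \<in> aug_ker p l k"
  show "\<forall>j\<le>k. aug_from p l j a = 0"
  proof (intro allI impI)
    fix j assume "j \<le> k"
    then have "(\<Sum>i<j. a i * int p ^ (l - i)) = 0" using a by (simp add: aug_ker_def)
    then show "aug_from p l j a = 0"
      using aug_eq_sum_lessThan_plus_aug_from[of j l p a] a \<open>j \<le> k\<close> assms(2)
      by (simp add: aug_ker_def)
  qed
next
  assume h: "\<forall>j\<le>k. aug_from p l j a = 0"
  have "a t = 0" if "t < k" for t
    using that h aug_from_Suc[of t l p a] assms by simp
  moreover have "aug p l a = 0"
    using h aug_eq_sum_lessThan_plus_aug_from[of 0 l p a] by simp
  ultimately show "a \<in> aug_ker p l k" using assms(3) by (simp add: aug_ker_def)
qed

lemma is_ideal_aug_ker: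
  assumes "p > 0" "k \<le> l"
  shows "is_ideal p l (aug_ker p l k)"
  unfolding is_ideal_def
proof (intro conjI ballI)
  show "aug_ker p l k \<subseteq> Rk l" by (auto simp: aug_ker_def)
  show "rzero \<in> aug_ker p l k" by (simp add: aug_ker_def rzero_def Rk_def aug_def)
  fix a assume a: "a \<in> aug_ker p l k"
  show "rneg a \<in> aug_ker p l k" using a
    by (simp add: aug_ker_def rneg_def Rk_def aug_def sum_negf)
  show "radd a b \<in> aug_ker p l k" if "b \<in> aug_ker p l k" for b
    using a that by (simp add: aug_ker_def radd_def Rk_def aug_def sum.distrib ring_distribs)
  show "rmult p l b a \<in> aug_ker p l k" if "b \<in> Rk l" for b
  proof -
    have "a \<in> Rk l" using a by (simp add: aug_ker_def)
    then have "\<forall>j\<le>k. aug_from p l j a = 0" using mem_aug_ker_iff_aug_from[OF assms] a by simp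
    then show ?thesis using mem_aug_ker_iff_aug_from[OF assms Rk_rmult] by (simp add: aug_from_rmult)
  qed
qed

lemma aug_ker_self: "aug_ker p k k = {rzero}"
proof -
  have "a = rzero" if a: "a \<in> aug_ker p k k" for a
  proof -
    have "(\<Sum>i<k. a i * int p ^ (k - i)) = 0" using a by (simp add: aug_ker_def)
    then have "a k = 0" using a aug_split_top[of p k a] by (simp add: aug_ker_def)
    then show ?thesis using a unfolding aug_ker_def Rk_def rzero_def
      by (auto intro!: ext) (metis linorder_neqE_nat)
  qed
  moreover have "rzero \<in> aug_ker p k k" by (simp add: aug_ker_def rzero_def Rk_def aug_def)
  ultimately show ?thesis by blast
qed

lemma aug_res: "aug p l (res p (Suc l) l a) = aug p (Suc l) a"
proof -
  have "aug p l (res p (Suc l) l a) =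
      (\<Sum>t<l. int p * a t * int p ^ (l - t)) + (a l * int p + a (Suc l))"
    unfolding aug_split_top by (simp add: res_def)
  also have "\<dots> = (\<Sum>t<l. a t * int p ^ (Suc l - t)) + (a l * int p + a (Suc l))"
    by (intro arg_cong2[where f="(+)"] sum.cong refl) (simp add: Suc_diff_le less_imp_le)
  also have "\<dots> = aug p (Suc l) a"
    unfolding aug_def by (simp flip: lessThan_Suc_atMost)
  finally show ?thesis .
qed

lemma Lop_aug_ker:
  assumes "p > 0" "k \<le> l"
  shows "Lop p (Suc l) (aug_ker p l k) = aug_ker p (Suc l) k"
proof -
  have "res p (Suc l) l a \<in> aug_ker p l k \<longleftrightarrow> a \<in> aug_ker p (Suc l) k"
    if "a \<in> Rk (Suc l)" for a
  proof -
    have "res p (Suc l) l a \<in> Rk l" by (simp add: Rk_def res_def)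
    moreover have "(\<forall>t<k. res p (Suc l) l a t = 0) \<longleftrightarrow> (\<forall>t<k. a t = 0)"
      using assms by (auto simp: res_def)
    ultimately show ?thesis using that by (simp add: aug_ker_def aug_res)
  qed
  then show ?thesis unfolding Lop_def by (auto simp: aug_ker_def)
qed

lemma Siter_eq_zero:
  assumes "p > 0"
  shows "Siter p k = {rzero}"
proof (induction k)
  case (Suc k)
  have "ind (Suc k) k rzero = rzero" "jnd p (Suc k) k rzero = rzero"
    using assms by (simp_all add: ind_def jnd_def rzero_def fun_eq_iff zero_power)
  then show ?case using Suc gen_ideal_zero by (simp add: Sop_def)
qed simp

lemma Liter_Siter_eq_aug_ker:
  assumes "p > 0"
  shows "Liter p k n (Siter p k) = aug_ker p (k + n) k"
  by (induction n) (simp_all add: Siter_eq_zero[OF assms] aug_ker_self Lop_aug_ker[OF assms])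

lemma Fel_apply: "Fel p l i t = (if t = i then 1 else 0) - (if t = l then int p ^ (l - i) else 0)"
  by (simp add: Fel_def radd_def rneg_def Xb_def rint_def)

lemma Fel_mem_aug_ker:
  assumes "k \<le> i" "i < l"
  shows "Fel p l i \<in> aug_ker p l k"
proof -
  have "aug p l (Fel p l i) = (\<Sum>t\<le>l. (if t = i then int p ^ (l - t) else 0))
      - (\<Sum>t\<le>l. (if t = l then int p ^ (l - i) else 0))"
    unfolding aug_def Fel_apply
    by (simp add: left_diff_distrib sum_subtractf if_distrib[of "\<lambda>x. x * _"] cong: if_cong)
  also have "\<dots> = 0" using assms by simp
  finally show ?thesis using assms by (auto simp: aug_ker_def Rk_def Fel_apply)
qed

text \<open>Every a in the kernel is the combination of the F_{l,i}, k \<le> i < l, with coefficients a_i.\<close>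

lemma aug_ker_subset_ideal:
  assumes I: "is_ideal p l I" and "k \<le> l"
    and Fel_mem: "\<And>i. k \<le> i \<Longrightarrow> i < l \<Longrightarrow> Fel p l i \<in> I"
  shows "aug_ker p l k \<subseteq> I"
proof
  fix a assume a: "a \<in> aug_ker p l k"
  have top: "a l = - (\<Sum>i\<in>{k..<l}. a i * int p ^ (l - i))"
  proof -
    have "(\<Sum>i<l. a i * int p ^ (l - i)) = (\<Sum>i<k. a i * int p ^ (l - i))
        + (\<Sum>i\<in>{k..<l}. a i * int p ^ (l - i))"
      using \<open>k \<le> l\<close> by (simp add: atLeast0LessThan[symmetric] sum.atLeastLessThan_concat)
    moreover have "(\<Sum>i<k. a i * int p ^ (l - i)) = 0" using a by (simp add: aug_ker_def)
    ultimately show ?thesis using a aug_split_top[of p l a] by (simp add: aug_ker_def)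
  qed
  have "a = (\<lambda>t. \<Sum>i\<in>{k..<l}. a i * Fel p l i t)"
  proof
    fix t
    have "(\<Sum>i\<in>{k..<l}. a i * Fel p l i t) = (\<Sum>i\<in>{k..<l}. if t = i then a i else 0)
        - (if t = l then (\<Sum>i\<in>{k..<l}. a i * int p ^ (l - i)) else 0)"
      unfolding Fel_apply
      by (simp add: right_diff_distrib sum_subtractf if_distrib[of "\<lambda>x. _ * x"] cong: if_cong)
    also have "\<dots> = a t" using a top by (auto simp: aug_ker_def Rk_def)
    finally show "a t = (\<Sum>i\<in>{k..<l}. a i * Fel p l i t)" by simp
  qed
  moreover have "(\<lambda>t. \<Sum>i\<in>{k..<l}. a i * Fel p l i t) \<in> I"
    using Fel_mem by (intro ideal_sum[OF I]) (auto intro: ideal_smult[OF I])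
  ultimately show "a \<in> I" by simp
qed

lemma Jid_zero_eq_aug_ker:
  assumes "p > 0" "k \<le> l"
  shows "Jid p l k 0 = aug_ker p l k"
proof (cases "k = l")
  case True
  then show ?thesis
    by (simp add: Jid_def rint_def flip: rzero_def) (simp add: gen_ideal_zero aug_ker_self)
next
  case False
  let ?F = "{Fel p l i | i. k \<le> i \<and> i \<le> l - 1}"
  have "Jid p l k 0 = gen_ideal p l ({rzero} \<union> ?F)"
    using False assms by (simp add: Jid_def rint_def flip: rzero_def)
  also have "\<dots> = aug_ker p l k"
  proof (rule gen_ideal_eqI[OF is_ideal_aug_ker[OF assms]])
    show "{rzero} \<union> ?F \<subseteq> aug_ker p l k"
      using is_ideal_aug_ker[OF assms] Fel_mem_aug_ker False assms by (auto simp: is_ideal_def)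
    show "aug_ker p l k \<subseteq> I" if "is_ideal p l I" "{rzero} \<union> ?F \<subseteq> I" for I
    proof (rule aug_ker_subset_ideal[OF that(1) assms(2)])
      fix i assume "k \<le> i" "i < l"
      then have "Fel p l i \<in> ?F" by auto
      then show "Fel p l i \<in> I" using that(2) by blast
    qed
  qed
  finally show ?thesis .
qed

lemma ind_Suc_eq_self: "x \<in> Rk l \<Longrightarrow> ind (Suc l) l x = x"
  by (auto simp: ind_def Rk_def fun_eq_iff)

lemma ind_mem_aug_ker:
  assumes "a \<in> aug_ker p l k"
  shows "ind (Suc l) l a \<in> aug_ker p (Suc l) k"
proof -
  have a: "a \<in> Rk l" using assms by (simp add: aug_ker_def)
  have "aug p (Suc l) a = (\<Sum>i\<le>l. a i * int p ^ (l - i) * int p) + a (Suc l)"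
    unfolding aug_def by (simp add: Suc_diff_le mult.assoc mult.commute[of "int p"])
  also have "\<dots> = aug p l a * int p" using a by (simp add: aug_def sum_distrib_right Rk_def)
  finally show ?thesis using assms a ind_Suc_eq_self[OF a] by (simp add: aug_ker_def Rk_def)
qed

lemma jnd_Suc_apply_Suc: "jnd p (Suc l) l m (Suc l) = m l"
  by (simp add: jnd_def)

lemma jnd_Suc_apply_self: "jnd p (Suc l) l m l = (m l ^ p - m l) div int p"
  by (simp add: jnd_def)

lemma jnd_Suc_apply_less:
  "i < l \<Longrightarrow> jnd p (Suc l) l m i =
     (aug_from p l i m ^ p - aug_from p l (Suc i) m ^ p) div int p ^ (Suc l - i)"
  by (simp add: jnd_def aug_from_def)

lemma jnd_Suc_apply_greater: "Suc l < i \<Longrightarrow> jnd p (Suc l) l m i = 0"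
  by (simp add: jnd_def)

text \<open>
  All divisions in jnd are exact, so aug (jnd m) telescopes to
  (aug m)^p - (m_l)^p + (m_l^p - m_l) + m_l = 0.
\<close>

lemma jnd_mem_aug_ker:
  assumes p: "prime p" and "k < l" and m: "m \<in> aug_ker p l k"
  shows "jnd p (Suc l) l m \<in> aug_ker p (Suc l) k"
proof -
  have p0: "p > 0" using p prime_gt_0_nat by blast
  let ?j = "jnd p (Suc l) l m"
  let ?A = "\<lambda>i. aug_from p l i m"
  have A_zero: "?A i = 0" if "i \<le> k" for i
    using that \<open>k < l\<close> m mem_aug_ker_iff_aug_from[OF p0, of k l m] by (simp add: aug_ker_def)
  have j_less: "?j i * int p ^ (Suc l - i) = ?A i ^ p - ?A (Suc i) ^ p" if "i < l" for i
  proof -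
    have "int p ^ Suc (l - i) dvd (m i * int p ^ (l - i) + ?A (Suc i)) ^ p - ?A (Suc i) ^ p"
      using that by (intro pow_diff_dvd_Suc) auto
    then have "int p ^ (Suc l - i) dvd ?A i ^ p - ?A (Suc i) ^ p"
      using that aug_from_Suc[of i l p m] by (simp add: Suc_diff_le)
    then show ?thesis using that by (simp add: jnd_Suc_apply_less)
  qed
  have j_self: "?j l * int p = m l ^ p - m l"
    using prime_dvd_pow_self_diff[OF p, of "m l"] by (simp add: jnd_Suc_apply_self)
  have "aug p (Suc l) ?j = (\<Sum>i<l. ?j i * int p ^ (Suc l - i)) + ?j l * int p + ?j (Suc l)"
    unfolding aug_def by (simp flip: lessThan_Suc_atMost)
  also have "(\<Sum>i<l. ?j i * int p ^ (Suc l - i)) = (\<Sum>i<l. ?A i ^ p - ?A (Suc i) ^ p)"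
    by (intro sum.cong refl) (simp add: j_less)
  also have "\<dots> = ?A 0 ^ p - ?A l ^ p" by (rule sum_lessThan_telescope')
  finally have "aug p (Suc l) ?j = 0"
    using A_zero[of 0] j_self p0 by (simp add: jnd_Suc_apply_Suc aug_from_def zero_power)
  moreover have "?j t = 0" if "t < k" for t
    using that A_zero[of t] A_zero[of "Suc t"] \<open>k < l\<close> p0
    by (simp add: jnd_Suc_apply_less zero_power)
  moreover have "?j \<in> Rk (Suc l)" by (simp add: Rk_def jnd_def)
  ultimately show ?thesis by (simp add: aug_ker_def)
qed

text \<open>The element p - X_{l,l-1} = -F_{l,l-1} of R_l (recall X_{l,l} = 1).\<close>

definition jnd_seed :: "nat \<Rightarrow> nat \<Rightarrow> (nat \<Rightarrow> int)" where
  "jnd_seed p l = (\<lambda>t. (if t = l then int p else 0) - (if t = l - 1 then 1 else 0))"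

lemma aug_from_jnd_seed:
  assumes "l \<ge> 1"
  shows "aug_from p l i (jnd_seed p l) = (if i \<le> l - 1 then 0 else if i = l then int p else 0)"
proof -
  have "aug_from p l i (jnd_seed p l) =
      (\<Sum>s\<in>{i..l}. if s = l then int p * int p ^ (l - s) else 0)
      - (\<Sum>s\<in>{i..l}. if s = l - 1 then int p ^ (l - s) else 0)"
    unfolding jnd_seed_def aug_from_def
    by (simp add: left_diff_distrib sum_subtractf if_distrib[of "\<lambda>x. x * _"] cong: if_cong)
  also have "\<dots> = (if i \<le> l then int p else 0) - (if i \<le> l - 1 then int p else 0)"
    using assms by (simp add: Suc_diff_le)
  finally show ?thesis by auto
qed

lemma jnd_seed_mem_aug_ker:
  assumes "k < l"
  shows "jnd_seed p l \<in> aug_ker p l k"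
proof -
  have "aug p l (jnd_seed p l) = 0"
    using aug_from_jnd_seed[of l p 0] assms aug_eq_sum_lessThan_plus_aug_from[of 0 l p] by simp
  then show ?thesis using assms by (auto simp: aug_ker_def jnd_seed_def Rk_def)
qed

lemma jnd_jnd_seed:
  assumes p: "prime p" and "l \<ge> 1"
  shows "jnd p (Suc l) l (jnd_seed p l) t =
    (if t = Suc l then int p else if t = l then int p ^ (p - 1) - 1
     else if t = l - 1 then - (int p ^ (p - 2)) else 0)"
proof -
  have p0: "p > 0" and p2: "p \<ge> 2" using p prime_gt_0_nat prime_ge_2_nat by blast+
  have pow_p: "int p ^ p = int p * int p ^ (p - 1)" "int p ^ p = int p ^ 2 * int p ^ (p - 2)"
    using p0 p2 by (simp_all flip: power_Suc power_add)
  consider "t = Suc l" | "t = l" | "t = l - 1" | "t < l - 1" | "t > Suc l" by linarith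
  then show ?thesis
  proof cases
    case 1 then show ?thesis using assms by (simp add: jnd_Suc_apply_Suc jnd_seed_def)
  next
    case 2
    have "int p ^ p - int p = int p * (int p ^ (p - 1) - 1)" using pow_p by (simp add: algebra_simps)
    then show ?thesis using 2 assms p0 by (simp add: jnd_Suc_apply_self jnd_seed_def)
  next
    case 3
    have z: "0 - int p ^ p = int p ^ 2 * - (int p ^ (p - 2))" using pow_p(2) by simp
    have "(0 - int p ^ p) div int p ^ 2 = - (int p ^ (p - 2))"
      by (subst z, rule nonzero_mult_div_cancel_left) (use p0 in simp)
    moreover have "Suc l - (l - 1) = 2" "Suc (l - 1) = l" using assms by auto
    ultimately show ?thesis
      using 3 assms p0 by (simp add: jnd_Suc_apply_less aug_from_jnd_seed zero_power)
  next
    case 4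
    then show ?thesis using assms p0 by (auto simp: jnd_Suc_apply_less aug_from_jnd_seed zero_power)
  next
    case 5 then show ?thesis by (simp add: jnd_Suc_apply_greater)
  qed
qed

text \<open>The two identities through which S(aug_ker p l k) reaches the generators F_{l+1,i}.\<close>

lemma Fel_Suc_self_eq:
  assumes "prime p" and "l \<ge> 1"
  shows "Fel p (Suc l) l =
    radd (\<lambda>t. int p ^ (p - 2) * jnd_seed p l t) (rneg (jnd p (Suc l) l (jnd_seed p l)))"
proof
  fix t
  have "p \<ge> 2" using assms(1) prime_ge_2_nat by blast
  then have "p - 1 = Suc (p - 2)" by simp
  then have pow_p: "int p ^ (p - 2) * int p = int p ^ (p - 1)" by (simp add: power_Suc2)
  consider "t = Suc l" | "t = l" | "t = l - 1" | "t \<noteq> Suc l \<and> t \<noteq> l \<and> t \<noteq> l - 1" by blast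
  then show "Fel p (Suc l) l t =
    radd (\<lambda>t. int p ^ (p - 2) * jnd_seed p l t) (rneg (jnd p (Suc l) l (jnd_seed p l))) t"
  proof cases
    case 2
    then show ?thesis using assms pow_p jnd_jnd_seed[OF assms, of t]
      by (simp add: Fel_apply radd_def rneg_def jnd_seed_def)
  next
    case 3
    then show ?thesis using assms jnd_jnd_seed[OF assms, of t]
      by (auto simp: Fel_apply radd_def rneg_def jnd_seed_def)
  qed (use assms jnd_jnd_seed[OF assms, of t] in
      \<open>simp_all add: Fel_apply radd_def rneg_def jnd_seed_def\<close>)
qed

lemma Fel_Suc_eq:
  assumes "i < l"
  shows "Fel p (Suc l) i = radd (Fel p l i) (\<lambda>t. int p ^ (l - i) * Fel p (Suc l) l t)"
proof
  fix t
  have pow: "int p ^ (l - i) * int p = int p ^ (Suc l - i)" using assms by (simp add: Suc_diff_le)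
  consider "t = i" | "t = l" | "t = Suc l" | "t \<noteq> i \<and> t \<noteq> l \<and> t \<noteq> Suc l" by blast
  then show "Fel p (Suc l) i t = radd (Fel p l i) (\<lambda>t. int p ^ (l - i) * Fel p (Suc l) l t) t"
    by cases (use assms pow in \<open>simp_all add: Fel_apply radd_def\<close>)
qed

lemma Sop_aug_ker:
  assumes p: "prime p" and "k < l"
  shows "Sop p (Suc l) (aug_ker p l k) = aug_ker p (Suc l) k"
proof -
  have p0: "p > 0" using p prime_gt_0_nat by blast
  have "l \<ge> 1" using \<open>k < l\<close> by simp
  let ?G = "ind (Suc l) l ` aug_ker p l k \<union> jnd p (Suc l) l ` aug_ker p l k"
  have "Sop p (Suc l) (aug_ker p l k) = gen_ideal p (Suc l) ?G" by (simp add: Sop_def)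
  also have "\<dots> = aug_ker p (Suc l) k"
  proof (rule gen_ideal_eqI[OF is_ideal_aug_ker[OF p0]])
    show "k \<le> Suc l" using \<open>k < l\<close> by simp
    show "?G \<subseteq> aug_ker p (Suc l) k"
      using ind_mem_aug_ker jnd_mem_aug_ker[OF p \<open>k < l\<close>] by blast
    fix I assume I: "is_ideal p (Suc l) I" "?G \<subseteq> I"
    have ind_mem: "x \<in> I" if "x \<in> aug_ker p l k" for x
    proof -
      have "ind (Suc l) l x \<in> I" using that I(2) by blast
      moreover have "x \<in> Rk l" using that by (simp add: aug_ker_def)
      ultimately show ?thesis by (simp add: ind_Suc_eq_self)
    qed
    have seed: "jnd_seed p l \<in> aug_ker p l k" using jnd_seed_mem_aug_ker[OF \<open>k < l\<close>] .
    have "jnd p (Suc l) l (jnd_seed p l) \<in> I" using I(2) seed by blast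
    then have "radd (\<lambda>t. int p ^ (p - 2) * jnd_seed p l t)
        (rneg (jnd p (Suc l) l (jnd_seed p l))) \<in> I"
      using I(1) ideal_smult[OF I(1) ind_mem[OF seed]] unfolding is_ideal_def by blast
    then have Fel_top: "Fel p (Suc l) l \<in> I" by (simp add: Fel_Suc_self_eq[OF p \<open>l \<ge> 1\<close>])
    show "aug_ker p (Suc l) k \<subseteq> I"
    proof (rule aug_ker_subset_ideal[OF I(1)])
      show "k \<le> Suc l" using \<open>k < l\<close> by simp
      fix i assume i: "k \<le> i" "i < Suc l"
      show "Fel p (Suc l) i \<in> I"
      proof (cases "i = l")
        case False
        then have "i < l" using i by simp
        have "radd (Fel p l i) (\<lambda>t. int p ^ (l - i) * Fel p (Suc l) l t) \<in> I"
          using I(1) ind_mem[OF Fel_mem_aug_ker[OF i(1) \<open>i < l\<close>]] ideal_smult[OF I(1) Fel_top]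
          unfolding is_ideal_def by blast
        then show ?thesis by (simp add: Fel_Suc_eq[OF \<open>i < l\<close>])
      qed (simp add: Fel_top)
    qed
  qed
  finally show ?thesis .
qed

theorem proposition6:
  fixes p r :: nat
  assumes "prime p"
  shows "(\<forall>k\<le>r. Siter p k = {rzero})
       \<and> (\<forall>l k. 1 \<le> l \<and> l \<le> r \<and> k \<le> l \<longrightarrow> Liter p k (l - k) (Siter p k) = Jid p l k 0)
       \<and> (\<forall>l k. 1 \<le> l \<and> l \<le> r \<and> k + 2 \<le> l \<longrightarrow>
            Sop p l (Liter p k (l - k - 1) (Siter p k)) = Liter p k (l - k) (Siter p k))"
proof -
  have p0: "p > 0" using assms prime_gt_0_nat by blast
  have "Liter p k (l - k) (Siter p k) = Jid p l k 0" if "k \<le> l" for k l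
    using that by (simp add: Liter_Siter_eq_aug_ker[OF p0] Jid_zero_eq_aug_ker[OF p0])
  moreover have "Sop p l (Liter p k (l - k - 1) (Siter p k)) = Liter p k (l - k) (Siter p k)"
    if k_l: "k + 2 \<le> l" for k l
  proof -
    obtain l' where "l = Suc l'" and "k < l'" using k_l by (cases l) auto
    then show ?thesis
      by (simp add: Liter_Siter_eq_aug_ker[OF p0] Sop_aug_ker[OF assms] Lop_aug_ker[OF p0] Suc_diff_le)
  qed
  ultimately show ?thesis by (simp add: Siter_eq_zero[OF p0])
qed

end
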